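(* Let $G$ be a connected graph that is $(5,\epsilon)$-distance-almost-uniform. Then $G^4$ is $(2,\epsilon)$-distance-almost-uniform and $diam(G^4)=\lceil diam(G)/4\rceil$.
   Context: For a graph $G$ on $n$ vertices and $v\in V(G)$, $A_s(v)$ is the set of vertices at distance exactly $s$ from $v$. $G$ is $(k,\epsilon)$-distance-almost-uniform if there exists $r$ such that $\max_{i=0}^{k-1}|A_{r+i}(u)|\ge n(1-\epsilon)$ for all $u\in V(G)$. For an undirected graph $G=(V,E)$, $G^k$ is the graph on vertex set $V$ with edge set $\{uv: 0<d_G(u,v)\le k\}$. *)

theory Defs
  imports Complex_Main
begin

definition simple_graph :: "'a set \<Rightarrow> ('a \<times> 'a) set \<Rightarrow> bool" where
  "simple_graph V E \<longleftrightarrow> finite V \<and> V \<noteq> {} \<and> E \<subseteq> V \<times> V \<and> sym E \<and> (\<forall>v. (v, v) \<notin> E)"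

definition graph_connected :: "'a set \<Rightarrow> ('a \<times> 'a) set \<Rightarrow> bool" where
  "graph_connected V E \<longleftrightarrow> (\<forall>u\<in>V. \<forall>v\<in>V. \<exists>k. (u, v) \<in> E ^^ k)"

text \<open>Graph distance: length of a shortest walk (0 if unreachable, irrelevant for connected graphs).\<close>
definition gdist :: "('a \<times> 'a) set \<Rightarrow> 'a \<Rightarrow> 'a \<Rightarrow> nat" where
  "gdist E u v = (LEAST k. (u, v) \<in> E ^^ k)"

definition sphere :: "'a set \<Rightarrow> ('a \<times> 'a) set \<Rightarrow> nat \<Rightarrow> 'a \<Rightarrow> 'a set" where
  "sphere V E s v = {u \<in> V. gdist E v u = s}"

definition dist_almost_uniform :: "'a set \<Rightarrow> ('a \<times> 'a) set \<Rightarrow> nat \<Rightarrow> real \<Rightarrow> bool" where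
  "dist_almost_uniform V E k \<epsilon> \<longleftrightarrow>
     (\<exists>r::nat. \<forall>u\<in>V. real (Max ((\<lambda>i. card (sphere V E (r + i) u)) ` {..<k})) \<ge> real (card V) * (1 - \<epsilon>))"

definition graph_power :: "'a set \<Rightarrow> ('a \<times> 'a) set \<Rightarrow> nat \<Rightarrow> ('a \<times> 'a) set" where
  "graph_power V E k = {(u, v). u \<in> V \<and> v \<in> V \<and> (\<exists>j. (u, v) \<in> E ^^ j) \<and> 0 < gdist E u v \<and> gdist E u v \<le> k}"

definition diameter :: "'a set \<Rightarrow> ('a \<times> 'a) set \<Rightarrow> nat" where
  "diameter V E = Max {gdist E u v | u v. u \<in> V \<and> v \<in> V}"

end

theory Submission
  imports Defs
begin

text \<open>Distances in \<open>G\<^sup>k\<close> are the distances in \<open>G\<close> divided by \<open>k\<close> and rounded up: a shortest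
  walk in \<open>G\<close> is cut into pieces of length at most \<open>k\<close>, and conversely every edge of \<open>G\<^sup>k\<close>
  expands to a walk of length at most \<open>k\<close> in \<open>G\<close>. Since rounding \<open>d/k\<close> up is monotone and maps
  \<open>k + 1\<close> consecutive integers into two consecutive ones, each sphere of \<open>G\<close> lies inside a
  sphere of \<open>G\<^sup>k\<close>, the \<open>k + 1\<close> spheres of a window in \<open>G\<close> land in a window of two spheres of
  \<open>G\<^sup>k\<close>, and the diameter of \<open>G\<^sup>k\<close> is that of \<open>G\<close> rounded in the same way.\<close>

lemma le_div_round_up_mult:
  fixes d k :: nat
  assumes "0 < k"
  shows "d \<le> (d + k - 1) div k * k"
  using assms div_mult_mod_eq[of "d + k - 1" k] mod_less_divisor[of k "d + k - 1"] by linarith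

lemma div_round_up_le_iff:
  fixes d k q :: nat
  assumes "0 < k"
  shows "(d + k - 1) div k \<le> q \<longleftrightarrow> d \<le> k * q"
proof -
  have "(d + k - 1) div k \<le> q \<longleftrightarrow> d + k - 1 < Suc q * k"
    using div_less_iff_less_mult[OF assms] by (simp flip: less_Suc_eq_le)
  also have "\<dots> \<longleftrightarrow> d \<le> k * q"
    using assms by (simp add: algebra_simps) arith
  finally show ?thesis .
qed

lemma div_round_up_window:
  fixes r i k :: nat
  assumes "0 < k" "i \<le> k"
  obtains t where "t < 2" "(r + i + k - 1) div k = (r + k - 1) div k + t"
proof -
  have "(r + i + k - 1) div k \<le> (r + k - 1 + k) div k"
    using assms by (intro div_le_mono) linarith
  also have "\<dots> = (r + k - 1) div k + 1"
    using assms(1) div_add_self2[of k "r + k - 1"] by linarith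
  finally have "(r + i + k - 1) div k < (r + k - 1) div k + 2" by simp
  moreover have "(r + k - 1) div k \<le> (r + i + k - 1) div k"
    by (intro div_le_mono) linarith
  ultimately show ?thesis
    using that[of "(r + i + k - 1) div k - (r + k - 1) div k"] by linarith
qed

lemma nat_ceiling_divide_eq_div:
  assumes "0 < k"
  shows "nat \<lceil>real d / real k\<rceil> = (d + k - 1) div k"
proof -
  define q where "q = (d + k - 1) div k"
  have "q * k < d + k" "d \<le> q * k"
    using div_mult_mod_eq[of "d + k - 1" k] mod_less_divisor[of k "d + k - 1"] assms
    unfolding q_def by linarith+
  then have "real q * real k < real d + real k" "real d \<le> real q * real k"
    unfolding of_nat_mult[symmetric] of_nat_add[symmetric] of_nat_less_iff of_nat_le_iff .
  then have "\<lceil>real d / real k\<rceil> = int q"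
    using assms by (intro ceiling_unique) (simp_all add: field_simps)
  then show ?thesis unfolding q_def by simp
qed

lemma relpow_target_in:
  assumes "E \<subseteq> V \<times> V" "(u, v) \<in> E ^^ m" "0 < m"
  shows "v \<in> V"
  using assms by (cases m) auto

lemma gdist_relpow:
  assumes "(u, v) \<in> E ^^ m"
  shows "(u, v) \<in> E ^^ gdist E u v" and "gdist E u v \<le> m"
  using assms unfolding gdist_def by (metis LeastI, metis Least_le)

lemma gdist_eq_0_imp_eq:
  assumes "(u, v) \<in> E ^^ m" "gdist E u v = 0"
  shows "u = v"
  using gdist_relpow(1)[OF assms(1)] assms(2) by simp

lemma relpow_in_graph_power:
  assumes "E \<subseteq> V \<times> V" "u \<in> V" "(u, v) \<in> E ^^ m" "0 < m" "m \<le> k" "u \<noteq> v"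
  shows "(u, v) \<in> graph_power V E k"
proof -
  have "v \<in> V" using relpow_target_in[OF assms(1,3,4)] .
  moreover have "gdist E u v \<le> k" using gdist_relpow(2)[OF assms(3)] assms(5) by simp
  moreover have "0 < gdist E u v" using gdist_eq_0_imp_eq[OF assms(3)] assms(6) by auto
  ultimately show ?thesis unfolding graph_power_def using assms(2,3) by auto
qed

lemma relpow_imp_relpow_graph_power:
  assumes "E \<subseteq> V \<times> V" "u \<in> V" "(u, v) \<in> E ^^ m" "m \<le> q * k"
  shows "\<exists>j \<le> q. (u, v) \<in> graph_power V E k ^^ j"
  using assms(3,4)
proof (induction q arbitrary: v m)
  case 0
  then show ?case by auto
next
  case (Suc q)
  show ?case
  proof (cases "m \<le> k")
    case True
    show ?thesis
    proof (cases "m = 0 \<or> u = v")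
      case True
      then show ?thesis using Suc.prems(1) by (auto intro!: exI[of _ 0])
    next
      case False
      then have "(u, v) \<in> graph_power V E k"
        using relpow_in_graph_power[OF assms(1,2) Suc.prems(1) _ \<open>m \<le> k\<close>] by simp
      then show ?thesis by (auto intro!: exI[of _ 1])
    qed
  next
    case False
    then have "(u, v) \<in> E ^^ (m - k) O E ^^ k"
      using Suc.prems(1) relpow_add[of "m - k" k E] by simp
    then obtain w where uw: "(u, w) \<in> E ^^ (m - k)" and wv: "(w, v) \<in> E ^^ k" by auto
    have "m - k \<le> q * k" using Suc.prems(2) by simp
    then obtain j where j: "j \<le> q" "(u, w) \<in> graph_power V E k ^^ j"
      using Suc.IH[OF uw] by blast
    have "0 < k" using False Suc.prems(2) by (cases k) auto
    have "w \<in> V" using relpow_target_in[OF assms(1) uw] False by simp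
    show ?thesis
    proof (cases "w = v")
      case True
      then show ?thesis using j le_SucI by blast
    next
      case False
      then have "(w, v) \<in> graph_power V E k"
        using relpow_in_graph_power[OF assms(1) \<open>w \<in> V\<close> wv \<open>0 < k\<close> order.refl] by simp
      then have "(u, v) \<in> graph_power V E k ^^ Suc j" using j(2) by auto
      then show ?thesis using j(1) Suc_le_mono by blast
    qed
  qed
qed

lemma relpow_graph_power_imp_relpow:
  assumes "(u, v) \<in> graph_power V E k ^^ j"
  shows "\<exists>m \<le> k * j. (u, v) \<in> E ^^ m"
  using assms
proof (induction j arbitrary: v)
  case 0
  then show ?case by auto
next
  case (Suc j)
  then obtain w where uw: "(u, w) \<in> graph_power V E k ^^ j" and wv: "(w, v) \<in> graph_power V E k"
    by auto
  obtain m where m: "m \<le> k * j" "(u, w) \<in> E ^^ m" using Suc.IH[OF uw] by auto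
  from wv obtain i where "(w, v) \<in> E ^^ i" and le_k: "gdist E w v \<le> k"
    unfolding graph_power_def by blast
  then have "(w, v) \<in> E ^^ gdist E w v" by (intro gdist_relpow(1))
  with m(2) have "(u, v) \<in> E ^^ (m + gdist E w v)" unfolding relpow_add by blast
  moreover have "m + gdist E w v \<le> k * Suc j" using m(1) le_k by simp
  ultimately show ?case by blast
qed

lemma gdist_graph_power:
  assumes "E \<subseteq> V \<times> V" "graph_connected V E" "u \<in> V" "v \<in> V" "0 < k"
  shows "gdist (graph_power V E k) u v = (gdist E u v + k - 1) div k"
proof (rule antisym)
  let ?d = "gdist E u v" and ?P = "graph_power V E k"
  obtain m where "(u, v) \<in> E ^^ m" using assms(2-4) unfolding graph_connected_def by blast
  then have "(u, v) \<in> E ^^ ?d" by (intro gdist_relpow(1))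
  then obtain j where j: "j \<le> (?d + k - 1) div k" "(u, v) \<in> ?P ^^ j"
    using relpow_imp_relpow_graph_power[OF assms(1,3)] le_div_round_up_mult[OF assms(5)] by blast
  then show "gdist ?P u v \<le> (?d + k - 1) div k"
    using gdist_relpow(2)[OF j(2)] by simp
  obtain m' where m': "m' \<le> k * gdist ?P u v" "(u, v) \<in> E ^^ m'"
    using relpow_graph_power_imp_relpow[OF gdist_relpow(1)[OF j(2)]] by blast
  then have "?d \<le> k * gdist ?P u v" using gdist_relpow(2)[OF m'(2)] by simp
  then show "(?d + k - 1) div k \<le> gdist ?P u v" using div_round_up_le_iff[OF assms(5)] by blast
qed

lemma sphere_subset_sphere_graph_power:
  assumes "E \<subseteq> V \<times> V" "graph_connected V E" "u \<in> V" "0 < k"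
  shows "sphere V E d u \<subseteq> sphere V (graph_power V E k) ((d + k - 1) div k) u"
  using gdist_graph_power[OF assms(1,2,3) _ assms(4)] unfolding sphere_def by auto

lemma dist_almost_uniform_graph_power:
  assumes "finite V" "E \<subseteq> V \<times> V" "graph_connected V E" "0 < k"
    and "dist_almost_uniform V E (k + 1) \<epsilon>"
  shows "dist_almost_uniform V (graph_power V E k) 2 \<epsilon>"
proof -
  let ?P = "graph_power V E k"
  obtain r where r: "\<forall>u\<in>V. real (Max ((\<lambda>i. card (sphere V E (r + i) u)) ` {..<k + 1}))
      \<ge> real (card V) * (1 - \<epsilon>)"
    using assms(5) unfolding dist_almost_uniform_def by blast
  have "real (Max ((\<lambda>i. card (sphere V ?P ((r + k - 1) div k + i) u)) ` {..<2}))
      \<ge> real (card V) * (1 - \<epsilon>)" if u: "u \<in> V" for u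
  proof -
    let ?S = "\<lambda>i. card (sphere V E (r + i) u)"
    have "Max (?S ` {..<k + 1}) \<in> ?S ` {..<k + 1}" by (intro Max_in) auto
    then obtain i where i: "i \<le> k" "Max (?S ` {..<k + 1}) = ?S i"
      by (auto simp: less_Suc_eq_le)
    obtain t where t: "t < 2" "(r + i + k - 1) div k = (r + k - 1) div k + t"
      using div_round_up_window[OF assms(4) i(1)] .
    have "?S i \<le> card (sphere V ?P ((r + k - 1) div k + t) u)"
      using sphere_subset_sphere_graph_power[OF assms(2,3) u assms(4), of "r + i"] t(2)
      by (intro card_mono) (auto simp: sphere_def assms(1) add.assoc)
    also have "\<dots> \<le> Max ((\<lambda>i. card (sphere V ?P ((r + k - 1) div k + i) u)) ` {..<2})"
      using t(1) by (intro Max_ge) auto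
    finally show ?thesis using r u i(2) by force
  qed
  then show ?thesis unfolding dist_almost_uniform_def by blast
qed

lemma diameter_graph_power:
  assumes "finite V" "V \<noteq> {}" "E \<subseteq> V \<times> V" "graph_connected V E" "0 < k"
  shows "diameter V (graph_power V E k) = (diameter V E + k - 1) div k"
proof -
  have diameter_eq: "diameter V F = Max ((\<lambda>(u, v). gdist F u v) ` (V \<times> V))" for F
    unfolding diameter_def by (rule arg_cong[where f = Max]) auto
  let ?D = "(\<lambda>(u, v). gdist E u v) ` (V \<times> V)"
  have image_eq:
    "(\<lambda>(u, v). gdist (graph_power V E k) u v) ` (V \<times> V) = (\<lambda>d. (d + k - 1) div k) ` ?D"
    unfolding image_image using gdist_graph_power[OF assms(3,4) _ _ assms(5)]
    by (intro image_cong) auto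
  have "mono (\<lambda>d::nat. (d + k - 1) div k)" by (intro monoI div_le_mono) simp
  moreover have "finite ?D" "?D \<noteq> {}" using assms(1,2) by auto
  ultimately show ?thesis unfolding diameter_eq image_eq by (rule mono_Max_commute[symmetric])
qed

theorem proposition10:
  fixes V :: "'a set" and E :: "('a \<times> 'a) set" and \<epsilon> :: real
  assumes "simple_graph V E"
    and "graph_connected V E"
    and "dist_almost_uniform V E 5 \<epsilon>"
  shows "dist_almost_uniform V (graph_power V E 4) 2 \<epsilon>
       \<and> diameter V (graph_power V E 4) = nat \<lceil>real (diameter V E) / 4\<rceil>"
proof
  have V: "finite V" "V \<noteq> {}" "E \<subseteq> V \<times> V" using assms(1) unfolding simple_graph_def by auto
  show "dist_almost_uniform V (graph_power V E 4) 2 \<epsilon>"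
    using dist_almost_uniform_graph_power[OF V(1,3) assms(2), of 4 \<epsilon>] assms(3) by simp
  show "diameter V (graph_power V E 4) = nat \<lceil>real (diameter V E) / 4\<rceil>"
    using diameter_graph_power[OF V assms(2), of 4] nat_ceiling_divide_eq_div[of 4 "diameter V E"]
    by simp
qed

end
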